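(* Let $S_X,S_Y$ be finite nonempty action sets, $\varphi:S_X\times S_Y\to\mathbb{R}$, and $\lambda\in[0,1)$. There exists a $(\varphi,\lambda)$-autocratic behavioral strategy for $X$ if and only if $\Phi_X^+\neq\emptyset$, $\Phi_X^-\neq\emptyset$, and either (i) $\Phi_X^+\cap\Phi_X^-\neq\emptyset$, or (ii) $\Phi_X^+\cap\Phi_X^-=\emptyset$ and $\lambda\ge\lambda_{\min}$, where $$\lambda_{\min}=1-\sup_{(\tau_X^+,\tau_X^-)\in\Phi_X^+\times\Phi_X^-}\frac{\min_{s_Y}\varphi(\tau_X^+,s_Y)-\max_{s_Y}\varphi(\tau_X^-,s_Y)}{\max\{\max_{s_Y}\varphi(\tau_X^+,s_Y)-\max_{s_Y}\varphi(\tau_X^-,s_Y),\ \min_{s_Y}\varphi(\tau_X^+,s_Y)-\min_{s_Y}\varphi(\tau_X^-,s_Y)\}},$$ all maxima and minima over $s_Y$ being taken over $S_Y$.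
   Context: Two players $X,Y$ play a repeated game with finite action sets $S_X,S_Y$; $\Delta(S)$ denotes the probability distributions on $S$. $\varphi$ is extended to mixed actions in its first argument by $\varphi(\tau_X,s_Y)=\mathbb{E}_{s_X\sim\tau_X}[\varphi(s_X,s_Y)]$. Histories: $\mathcal{H}=\bigcup_{T\ge0}(S_X\times S_Y)^T$. A behavioral strategy for $X$ is a map $\sigma_X:\mathcal{H}\to\Delta(S_X)$, similarly for $Y$; in each round $t$ players independently draw actions from their strategies evaluated at the history of realized action pairs of rounds $0,\dots,t-1$, and $\mathbb{E}_{\sigma_X,\sigma_Y}$ is the expectation over the resulting play. For $\lambda\in[0,1)$, $\sigma_X$ is $(\varphi,\lambda)$-autocratic if for every behavioral strategy $\sigma_Y$ of $Y$, $\mathbb{E}_{\sigma_X,\sigma_Y}\big[(1-\lambda)\sum_{t\ge0}\lambda^t\varphi(s_X^t,s_Y^t)\big]=0$. Define $\Phi_X^+=\{\tau_X\in\Delta(S_X):\min_{s_Y\in S_Y}\varphi(\tau_X,s_Y)\ge0\}$ and $\Phi_X^-=\{\tau_X\in\Delta(S_X):\max_{s_Y\in S_Y}\varphi(\tau_X,s_Y)\le0\}$. *)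

theory Defs
  imports "HOL-Probability.Probability"
begin

text \<open>Action sets are finite (nonempty) types 'a (for X) and 'b (for Y). Histories are lists of realized action pairs in
  chronological order (round 0 first).\<close>

type_synonym ('a, 'b) hist = "('a \<times> 'b) list"

definition phi_mix :: "('a \<Rightarrow> 'b \<Rightarrow> real) \<Rightarrow> 'a pmf \<Rightarrow> 'b \<Rightarrow> real" where
  "phi_mix phi \<tau> b = measure_pmf.expectation \<tau> (\<lambda>a. phi a b)"

text \<open>The auxiliary function takes the history in reversed order (most recent
  round first); strategies are always applied to the chronological history.\<close>

fun hist_prob_rev :: "(('a, 'b) hist \<Rightarrow> 'a pmf) \<Rightarrow> (('a, 'b) hist \<Rightarrow> 'b pmf)
    \<Rightarrow> ('a \<times> 'b) list \<Rightarrow> real" where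
  "hist_prob_rev \<sigma>X \<sigma>Y [] = 1"
| "hist_prob_rev \<sigma>X \<sigma>Y ((a, b) # h) =
     hist_prob_rev \<sigma>X \<sigma>Y h * pmf (\<sigma>X (rev h)) a * pmf (\<sigma>Y (rev h)) b"

definition hist_prob :: "(('a, 'b) hist \<Rightarrow> 'a pmf) \<Rightarrow> (('a, 'b) hist \<Rightarrow> 'b pmf)
    \<Rightarrow> ('a, 'b) hist \<Rightarrow> real" where
  "hist_prob \<sigma>X \<sigma>Y h = hist_prob_rev \<sigma>X \<sigma>Y (rev h)"

definition stage_payoff :: "('a::finite \<Rightarrow> 'b::finite \<Rightarrow> real)
    \<Rightarrow> (('a, 'b) hist \<Rightarrow> 'a pmf) \<Rightarrow> (('a, 'b) hist \<Rightarrow> 'b pmf) \<Rightarrow> nat \<Rightarrow> real" where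
  "stage_payoff phi \<sigma>X \<sigma>Y t =
     (\<Sum>h\<in>{h :: ('a, 'b) hist. length h = t}.
        hist_prob \<sigma>X \<sigma>Y h *
        (\<Sum>a\<in>UNIV. \<Sum>b\<in>UNIV. pmf (\<sigma>X h) a * pmf (\<sigma>Y h) b * phi a b))"

text \<open>Expected normalized discounted payoff
  E[(1-\<lambda>) \<Sum>t \<lambda>^t phi(s_X^t, s_Y^t)] (interchange of expectation and sum
  is justified since phi is bounded and \<lambda> < 1).\<close>

definition disc_payoff :: "('a::finite \<Rightarrow> 'b::finite \<Rightarrow> real) \<Rightarrow> real
    \<Rightarrow> (('a, 'b) hist \<Rightarrow> 'a pmf) \<Rightarrow> (('a, 'b) hist \<Rightarrow> 'b pmf) \<Rightarrow> real" where
  "disc_payoff phi lam \<sigma>X \<sigma>Y = (1 - lam) * (\<Sum>t. lam ^ t * stage_payoff phi \<sigma>X \<sigma>Y t)"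

definition autocratic :: "('a::finite \<Rightarrow> 'b::finite \<Rightarrow> real) \<Rightarrow> real
    \<Rightarrow> (('a, 'b) hist \<Rightarrow> 'a pmf) \<Rightarrow> bool" where
  "autocratic phi lam \<sigma>X \<longleftrightarrow> (\<forall>\<sigma>Y :: ('a, 'b) hist \<Rightarrow> 'b pmf. disc_payoff phi lam \<sigma>X \<sigma>Y = 0)"

definition minY :: "('a \<Rightarrow> 'b::finite \<Rightarrow> real) \<Rightarrow> 'a pmf \<Rightarrow> real" where
  "minY phi \<tau> = Min (range (phi_mix phi \<tau>))"

definition maxY :: "('a \<Rightarrow> 'b::finite \<Rightarrow> real) \<Rightarrow> 'a pmf \<Rightarrow> real" where
  "maxY phi \<tau> = Max (range (phi_mix phi \<tau>))"

definition PhiPlus :: "('a \<Rightarrow> 'b::finite \<Rightarrow> real) \<Rightarrow> 'a pmf set" where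
  "PhiPlus phi = {\<tau>. minY phi \<tau> \<ge> 0}"

definition PhiMinus :: "('a \<Rightarrow> 'b::finite \<Rightarrow> real) \<Rightarrow> 'a pmf set" where
  "PhiMinus phi = {\<tau>. maxY phi \<tau> \<le> 0}"

definition lambda_min :: "('a \<Rightarrow> 'b::finite \<Rightarrow> real) \<Rightarrow> real" where
  "lambda_min phi = 1 - Sup ((\<lambda>(tp, tm).
      (minY phi tp - maxY phi tm) /
      max (maxY phi tp - maxY phi tm) (minY phi tp - minY phi tm))
      ` (PhiPlus phi \<times> PhiMinus phi))"

end

(*
  An autocratic strategy enforces the value 0, and after every first-round outcome of
  positive probability its continuation again enforces some value, whatever Y does.
  Let S and I be the supremum and the infimum of all enforceable values, so I <= 0 <= S.
  Comparing the first round with the continuation, the first mixed action tau+ of a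
  strategy enforcing a value close to S satisfies phi(tau+, .) >= S and
  (1 - lam) phi(tau+, .) <= S - lam I, and symmetrically for a value close to I.  These
  inequalities say that tau+ and tau- lie in Phi+ and Phi- and that 1 - lam is at most
  the quotient in the definition of lambda_min at (tau+, tau-).  Compactness of the
  simplex of mixed actions turns the approximate pairs into an exact one.

  Conversely, given such a pair, X promises a value w between max phi(tau-, .) and
  min phi(tau+, .) and plays a mixture of tau+ and tau- for which, whatever Y plays, the
  remaining promise (w - (1 - lam) phi) / lam lies in the same interval.  The deviation
  of the discounted payoff from the promise then shrinks by the factor lam in every
  round, so it vanishes, and the promise w = 0 makes the strategy autocratic.
*)
theory Submission
  imports Defs
begin

lemma tendsto_Min:
  fixes f :: "'x \<Rightarrow> 'i \<Rightarrow> 'a::linorder_topology"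
  assumes "finite I" "I \<noteq> {}" "\<And>i. i \<in> I \<Longrightarrow> ((\<lambda>x. f x i) \<longlongrightarrow> l i) F"
  shows "((\<lambda>x. Min (f x ` I)) \<longlongrightarrow> Min (l ` I)) F"
  using assms by (induction I rule: finite_ne_induct) (auto intro!: tendsto_min)

lemma tendsto_Max:
  fixes f :: "'x \<Rightarrow> 'i \<Rightarrow> 'a::linorder_topology"
  assumes "finite I" "I \<noteq> {}" "\<And>i. i \<in> I \<Longrightarrow> ((\<lambda>x. f x i) \<longlongrightarrow> l i) F"
  shows "((\<lambda>x. Max (f x ` I)) \<longlongrightarrow> Max (l ` I)) F"
  using assms by (induction I rule: finite_ne_induct) (auto intro!: tendsto_max)

lemma pmf_convergent_subseq:
  fixes P :: "nat \<Rightarrow> 'a::finite pmf"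
  obtains r p where "strict_mono r" "\<And>a. (\<lambda>n. pmf (P (r n)) a) \<longlonglongrightarrow> pmf p a"
proof -
  define x where "x n = (\<chi> a. pmf (P n) a)" for n
  have "x n \<in> cbox 0 1" for n
    by (auto simp: x_def mem_box_cart pmf_le_1)
  then obtain l r where l: "l \<in> cbox 0 1" and r: "strict_mono r" and lim: "(x \<circ> r) \<longlonglongrightarrow> l"
    using compact_cbox[THEN compact_imp_seq_compact] unfolding seq_compact_def by metis
  have lim_a: "(\<lambda>n. pmf (P (r n)) a) \<longlonglongrightarrow> l $ a" for a
    using tendsto_vec_nth[OF lim, of a] by (simp add: x_def o_def)
  have nonneg: "0 \<le> l $ a" for a
    using l by (auto simp: mem_box_cart)
  have "(\<lambda>n. \<Sum>a\<in>UNIV. pmf (P (r n)) a) \<longlonglongrightarrow> (\<Sum>a\<in>UNIV. l $ a)"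
    by (intro tendsto_sum lim_a)
  moreover have "(\<Sum>a\<in>UNIV. pmf (P (r n)) a) = 1" for n
    by (rule sum_pmf_eq_1) auto
  ultimately have "(\<Sum>a\<in>UNIV. l $ a) = 1"
    by (simp add: LIMSEQ_const_iff)
  then have "(\<integral>\<^sup>+a. ennreal (l $ a) \<partial>count_space UNIV) = 1"
    by (subst nn_integral_count_space_finite) (simp_all add: sum_ennreal nonneg)
  then have "pmf (embed_pmf (\<lambda>a. l $ a)) a = l $ a" for a
    using pmf_embed_pmf[of "\<lambda>a. l $ a"] nonneg by simp
  with r lim_a show thesis
    by (intro that[of r "embed_pmf (\<lambda>a. l $ a)"]) simp_all
qed

lemma pmf_average_le:
  fixes p :: "'a::finite pmf"
  assumes "\<And>a. 0 < pmf p a \<Longrightarrow> f a \<le> M"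
  shows "(\<Sum>a\<in>UNIV. pmf p a * f a) \<le> M"
proof -
  have "(\<Sum>a\<in>UNIV. pmf p a * f a) \<le> (\<Sum>a\<in>UNIV. pmf p a * M)"
    using assms by (intro sum_mono) (metis mult_left_mono order_le_less pmf_nonneg mult_zero_left)
  also have "\<dots> = M"
    by (simp add: sum_distrib_right[symmetric] sum_pmf_eq_1)
  finally show ?thesis .
qed

lemma pmf_average_ge:
  fixes p :: "'a::finite pmf"
  assumes "\<And>a. 0 < pmf p a \<Longrightarrow> M \<le> f a"
  shows "M \<le> (\<Sum>a\<in>UNIV. pmf p a * f a)"
  using pmf_average_le[of p "\<lambda>a. - f a" "- M"] assms by (simp add: sum_negf)

lemma pmf_average_abs_le:
  fixes p :: "'a::finite pmf"
  assumes "\<And>a. \<bar>f a\<bar> \<le> M"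
  shows "\<bar>\<Sum>a\<in>UNIV. pmf p a * f a\<bar> \<le> M"
proof -
  have "(\<Sum>a\<in>UNIV. pmf p a * f a) \<le> M"
    using assms by (intro pmf_average_le) (simp add: abs_le_iff)
  moreover have "- M \<le> (\<Sum>a\<in>UNIV. pmf p a * f a)"
    using assms by (intro pmf_average_ge) (metis abs_le_iff minus_le_iff)
  ultimately show ?thesis
    by (simp add: abs_le_iff)
qed

lemma pmf_pmf_average_abs_le:
  fixes p :: "'a::finite pmf" and q :: "'b::finite pmf"
  assumes "\<And>a b. \<bar>f a b\<bar> \<le> M"
  shows "\<bar>\<Sum>a\<in>UNIV. \<Sum>b\<in>UNIV. pmf p a * pmf q b * f a b\<bar> \<le> M"
proof -
  have "\<bar>\<Sum>a\<in>UNIV. pmf p a * (\<Sum>b\<in>UNIV. pmf q b * f a b)\<bar> \<le> M"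
    using assms by (intro pmf_average_abs_le)
  then show ?thesis
    by (simp add: sum_distrib_left mult.assoc)
qed

lemma exists_mix_weight:
  fixes x0 x1 y0 y1 v :: real
  assumes "x0 \<le> v" "v \<le> y1" "x0 \<le> y0" "x1 \<le> y1"
  shows "\<exists>p\<in>{0..1}. (1 - p) * x0 + p * x1 \<le> v \<and> v \<le> (1 - p) * y0 + p * y1"
proof (cases "x1 \<le> v")
  case True
  then show ?thesis
    using assms by (intro bexI[of _ 1]) auto
next
  case False
  define p where "p = (v - x0) / (x1 - x0)"
  have p: "0 \<le> p" "p \<le> 1"
    using False assms by (auto simp: p_def field_simps)
  have "x1 - x0 \<noteq> 0"
    using False assms by simp
  then have "p * (x1 - x0) = v - x0"
    by (simp add: p_def)
  then have "(1 - p) * x0 + p * x1 = v"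
    by (simp add: algebra_simps)
  moreover have "(1 - p) * x0 + p * x1 \<le> (1 - p) * y0 + p * y1"
    using p assms by (intro add_mono mult_left_mono) auto
  ultimately show ?thesis
    using p by auto
qed

section \<open>The discounted payoff\<close>

definition continuation :: "(('a, 'b) hist \<Rightarrow> 'c) \<Rightarrow> 'a \<Rightarrow> 'b \<Rightarrow> ('a, 'b) hist \<Rightarrow> 'c" where
  "continuation \<sigma> a b h = \<sigma> ((a, b) # h)"

lemma hist_prob_Cons:
  "hist_prob \<sigma>X \<sigma>Y ((a, b) # h) =
     pmf (\<sigma>X []) a * pmf (\<sigma>Y []) b * hist_prob (continuation \<sigma>X a b) (continuation \<sigma>Y a b) h"
proof (induction h rule: rev_induct)
  case (snoc x h)
  then show ?case
    by (cases x) (simp add: hist_prob_def continuation_def)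
qed (simp add: hist_prob_def)

lemma sum_lists_length_Suc:
  "(\<Sum>h\<in>{h :: 'c::finite list. length h = Suc t}. f h) = (\<Sum>x\<in>UNIV. \<Sum>h\<in>{h. length h = t}. f (x # h))"
proof -
  have "{h :: 'c list. length h = Suc t} = (\<lambda>(h, x). x # h) ` ({h. length h = t} \<times> UNIV)"
    using lists_length_Suc_eq[of UNIV t] by simp
  then have "(\<Sum>h\<in>{h :: 'c list. length h = Suc t}. f h) = (\<Sum>(h, x)\<in>{h. length h = t} \<times> UNIV. f (x # h))"
    by (simp add: sum.reindex inj_on_def prod_eq_iff case_prod_unfold)
  also have "\<dots> = (\<Sum>h\<in>{h. length h = t}. \<Sum>x\<in>UNIV. f (x # h))"
    by (rule sum.cartesian_product[symmetric])
  also have "\<dots> = (\<Sum>x\<in>UNIV. \<Sum>h\<in>{h. length h = t}. f (x # h))"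
    by (rule sum.swap)
  finally show ?thesis .
qed

lemma sum_UNIV_pairs:
  "(\<Sum>x\<in>UNIV. f x) = (\<Sum>a\<in>UNIV. \<Sum>b\<in>UNIV. f (a, b))"
  by (simp add: sum.cartesian_product flip: UNIV_Times_UNIV)

lemma stage_payoff_0:
  "stage_payoff phi \<sigma>X \<sigma>Y 0 = (\<Sum>a\<in>UNIV. \<Sum>b\<in>UNIV. pmf (\<sigma>X []) a * pmf (\<sigma>Y []) b * phi a b)"
proof -
  have "{h :: ('a \<times> 'b) list. length h = 0} = {[]}" by auto
  then show ?thesis by (simp add: stage_payoff_def hist_prob_def)
qed

lemma stage_payoff_Suc:
  "stage_payoff phi \<sigma>X \<sigma>Y (Suc t) =
     (\<Sum>a\<in>UNIV. \<Sum>b\<in>UNIV. pmf (\<sigma>X []) a * pmf (\<sigma>Y []) b *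
        stage_payoff phi (continuation \<sigma>X a b) (continuation \<sigma>Y a b) t)"
proof -
  define u where "u \<sigma>X' \<sigma>Y' h = (\<Sum>a\<in>UNIV. \<Sum>b\<in>UNIV. pmf (\<sigma>X' h) a * pmf (\<sigma>Y' h) b * phi a b)"
    for \<sigma>X' :: "('a, 'b) hist \<Rightarrow> 'a pmf" and \<sigma>Y' :: "('a, 'b) hist \<Rightarrow> 'b pmf" and h
  have stage: "stage_payoff phi \<sigma>X' \<sigma>Y' t' = (\<Sum>h\<in>{h. length h = t'}. hist_prob \<sigma>X' \<sigma>Y' h * u \<sigma>X' \<sigma>Y' h)"
    for \<sigma>X' \<sigma>Y' t'
    by (simp add: stage_payoff_def u_def)
  have "u \<sigma>X \<sigma>Y ((a, b) # h) = u (continuation \<sigma>X a b) (continuation \<sigma>Y a b) h" for a b h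
    by (simp add: u_def continuation_def)
  then show ?thesis
    unfolding stage sum_lists_length_Suc sum_UNIV_pairs[where f = "\<lambda>x. \<Sum>h\<in>_. _ x h"]
    by (simp add: hist_prob_Cons sum_distrib_left mult.assoc)
qed

lemma finite_payoff_bounded:
  fixes phi :: "'a::finite \<Rightarrow> 'b::finite \<Rightarrow> real"
  obtains B where "\<And>a b. \<bar>phi a b\<bar> \<le> B"
proof
  fix a b
  have "\<bar>phi a b\<bar> \<le> (\<Sum>b'\<in>UNIV. \<bar>phi a b'\<bar>)"
    by (rule member_le_sum) auto
  also have "\<dots> \<le> (\<Sum>a'\<in>UNIV. \<Sum>b'\<in>UNIV. \<bar>phi a' b'\<bar>)"
    by (rule member_le_sum) (auto intro: sum_nonneg)
  finally show "\<bar>phi a b\<bar> \<le> (\<Sum>a'\<in>UNIV. \<Sum>b'\<in>UNIV. \<bar>phi a' b'\<bar>)" .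
qed

lemma stage_payoff_abs_le:
  assumes "\<And>a b. \<bar>phi a b\<bar> \<le> B"
  shows "\<bar>stage_payoff phi \<sigma>X \<sigma>Y t\<bar> \<le> B"
proof (induction t arbitrary: \<sigma>X \<sigma>Y)
  case 0
  show ?case
    unfolding stage_payoff_0 by (rule pmf_pmf_average_abs_le) (rule assms)
next
  case (Suc t)
  show ?case
    unfolding stage_payoff_Suc by (rule pmf_pmf_average_abs_le) (rule Suc.IH)
qed

lemma discounted_stage_payoff_abs_le:
  assumes "\<And>a b. \<bar>phi a b\<bar> \<le> B" "0 \<le> lam"
  shows "\<bar>lam ^ t * stage_payoff phi \<sigma>X \<sigma>Y t\<bar> \<le> B * lam ^ t"
proof -
  have "lam ^ t * \<bar>stage_payoff phi \<sigma>X \<sigma>Y t\<bar> \<le> lam ^ t * B"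
    using assms by (intro mult_left_mono stage_payoff_abs_le) auto
  then show ?thesis
    using assms(2) by (simp add: abs_mult mult.commute)
qed

lemma summable_discounted_stage_payoff:
  fixes phi :: "'a::finite \<Rightarrow> 'b::finite \<Rightarrow> real"
  assumes "0 \<le> lam" "lam < 1"
  shows "summable (\<lambda>t. lam ^ t * stage_payoff phi \<sigma>X \<sigma>Y t)"
proof -
  obtain B where B: "\<And>a b. \<bar>phi a b\<bar> \<le> B"
    using finite_payoff_bounded by blast
  show ?thesis
  proof (rule summable_comparison_test')
    show "summable (\<lambda>t. B * lam ^ t)"
      using assms by (intro summable_mult summable_geometric) simp
    show "norm (lam ^ t * stage_payoff phi \<sigma>X \<sigma>Y t) \<le> B * lam ^ t" for t
      using discounted_stage_payoff_abs_le[of phi B lam t] B assms by simp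
  qed
qed

lemma disc_payoff_abs_le:
  assumes "\<And>a b. \<bar>phi a b\<bar> \<le> B" "0 \<le> lam" "lam < 1"
  shows "\<bar>disc_payoff phi lam \<sigma>X \<sigma>Y\<bar> \<le> B"
proof -
  have "norm (\<Sum>t. lam ^ t * stage_payoff phi \<sigma>X \<sigma>Y t) \<le> (\<Sum>t. B * lam ^ t)"
  proof (rule norm_suminf_le)
    show "norm (lam ^ t * stage_payoff phi \<sigma>X \<sigma>Y t) \<le> B * lam ^ t" for t
      using assms by (simp add: discounted_stage_payoff_abs_le)
    show "summable (\<lambda>t. B * lam ^ t)"
      using assms by (intro summable_mult summable_geometric) simp
  qed
  also have "\<dots> = B / (1 - lam)"
    using assms by (simp add: suminf_mult suminf_geometric)
  finally have "\<bar>\<Sum>t. lam ^ t * stage_payoff phi \<sigma>X \<sigma>Y t\<bar> * (1 - lam) \<le> B"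
    using assms by (simp add: pos_le_divide_eq)
  then show ?thesis
    using assms by (simp add: disc_payoff_def abs_mult mult.commute)
qed

lemma disc_payoff_unfold:
  fixes phi :: "'a::finite \<Rightarrow> 'b::finite \<Rightarrow> real"
  assumes "0 \<le> lam" "lam < 1"
  shows "disc_payoff phi lam \<sigma>X \<sigma>Y =
    (\<Sum>a\<in>UNIV. \<Sum>b\<in>UNIV. pmf (\<sigma>X []) a * pmf (\<sigma>Y []) b *
       ((1 - lam) * phi a b + lam * disc_payoff phi lam (continuation \<sigma>X a b) (continuation \<sigma>Y a b)))"
proof -
  define w where "w a b = pmf (\<sigma>X []) a * pmf (\<sigma>Y []) b" for a b
  define s where "s a b t = lam ^ t * stage_payoff phi (continuation \<sigma>X a b) (continuation \<sigma>Y a b) t"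
    for a b t
  have summable: "summable (s a b)" for a b
    unfolding s_def using assms by (rule summable_discounted_stage_payoff)
  have continuation_value: "(1 - lam) * suminf (s a b) =
      disc_payoff phi lam (continuation \<sigma>X a b) (continuation \<sigma>Y a b)" for a b
    by (simp add: disc_payoff_def s_def[abs_def])
  have "summable (\<lambda>t. lam ^ t * stage_payoff phi \<sigma>X \<sigma>Y t)"
    using assms by (rule summable_discounted_stage_payoff)
  then have "(\<Sum>t. lam ^ t * stage_payoff phi \<sigma>X \<sigma>Y t) =
      stage_payoff phi \<sigma>X \<sigma>Y 0 + (\<Sum>t. lam ^ Suc t * stage_payoff phi \<sigma>X \<sigma>Y (Suc t))"
    by (subst suminf_split_head) simp_all
  also have "(\<Sum>t. lam ^ Suc t * stage_payoff phi \<sigma>X \<sigma>Y (Suc t)) =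
      (\<Sum>t. lam * (\<Sum>a\<in>UNIV. \<Sum>b\<in>UNIV. w a b * s a b t))"
    by (simp add: stage_payoff_Suc s_def w_def sum_distrib_left mult_ac)
  also have "\<dots> = lam * (\<Sum>t. \<Sum>a\<in>UNIV. \<Sum>b\<in>UNIV. w a b * s a b t)"
    using summable by (intro suminf_mult summable_sum summable_mult)
  also have "(\<Sum>t. \<Sum>a\<in>UNIV. \<Sum>b\<in>UNIV. w a b * s a b t) = (\<Sum>a\<in>UNIV. \<Sum>b\<in>UNIV. \<Sum>t. w a b * s a b t)"
    using summable by (simp add: suminf_sum summable_sum summable_mult)
  also have "\<dots> = (\<Sum>a\<in>UNIV. \<Sum>b\<in>UNIV. w a b * suminf (s a b))"
    using summable by (simp add: suminf_mult)
  finally have "disc_payoff phi lam \<sigma>X \<sigma>Y = (1 - lam) * stage_payoff phi \<sigma>X \<sigma>Y 0 +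
      lam * (\<Sum>a\<in>UNIV. \<Sum>b\<in>UNIV. w a b * ((1 - lam) * suminf (s a b)))"
    by (simp add: disc_payoff_def algebra_simps sum_distrib_left)
  then show ?thesis
    unfolding continuation_value
    by (simp add: stage_payoff_0 w_def algebra_simps sum.distrib sum_subtractf sum_distrib_left)
qed

section \<open>Autocratic pairs of mixed actions\<close>

lemma phi_mix_eq_sum:
  fixes phi :: "'a::finite \<Rightarrow> 'b \<Rightarrow> real"
  shows "phi_mix phi \<tau> b = (\<Sum>a\<in>UNIV. pmf \<tau> a * phi a b)"
  unfolding phi_mix_def by (subst integral_measure_pmf_real[of UNIV]) (auto simp: mult.commute)

lemma sum_pmf_pmf_phi_mix:
  fixes phi :: "'a::finite \<Rightarrow> 'b::finite \<Rightarrow> real"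
  shows "(\<Sum>a\<in>UNIV. \<Sum>b\<in>UNIV. pmf p a * pmf q b * (c * phi a b + g b)) =
    (\<Sum>b\<in>UNIV. pmf q b * (c * phi_mix phi p b + g b))"
proof -
  have "(\<Sum>a\<in>UNIV. pmf p a * (c * phi a b + g b)) = c * (\<Sum>a\<in>UNIV. pmf p a * phi a b) + (\<Sum>a\<in>UNIV. pmf p a) * g b"
    for b by (simp add: algebra_simps sum.distrib sum_distrib_left sum_distrib_right)
  then have inner: "(\<Sum>a\<in>UNIV. pmf p a * (c * phi a b + g b)) = c * phi_mix phi p b + g b" for b
    by (simp add: phi_mix_eq_sum sum_pmf_eq_1)
  have "(\<Sum>a\<in>UNIV. \<Sum>b\<in>UNIV. pmf p a * pmf q b * (c * phi a b + g b)) =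
      (\<Sum>b\<in>UNIV. pmf q b * (\<Sum>a\<in>UNIV. pmf p a * (c * phi a b + g b)))"
    by (subst sum.swap) (simp add: sum_distrib_left mult_ac)
  then show ?thesis
    by (simp add: inner)
qed

lemma phi_mix_abs_le:
  fixes phi :: "'a::finite \<Rightarrow> 'b \<Rightarrow> real"
  assumes "\<And>a b. \<bar>phi a b\<bar> \<le> B"
  shows "\<bar>phi_mix phi \<tau> b\<bar> \<le> B"
  unfolding phi_mix_eq_sum using assms by (rule pmf_average_abs_le)

lemma minY_le: "minY phi \<tau> \<le> phi_mix phi \<tau> b"
  unfolding minY_def by (rule Min_le) auto

lemma maxY_ge: "phi_mix phi \<tau> b \<le> maxY phi \<tau>"
  unfolding maxY_def by (rule Max_ge) auto

lemma minY_attained: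
  obtains b where "minY phi \<tau> = phi_mix phi \<tau> b"
proof -
  have "minY phi \<tau> \<in> range (phi_mix phi \<tau>)"
    unfolding minY_def by (rule Min_in) auto
  then show thesis using that by auto
qed

lemma maxY_attained:
  obtains b where "maxY phi \<tau> = phi_mix phi \<tau> b"
proof -
  have "maxY phi \<tau> \<in> range (phi_mix phi \<tau>)"
    unfolding maxY_def by (rule Max_in) auto
  then show thesis using that by auto
qed

lemma minY_abs_le:
  fixes phi :: "'a::finite \<Rightarrow> 'b::finite \<Rightarrow> real"
  assumes "\<And>a b. \<bar>phi a b\<bar> \<le> B"
  shows "\<bar>minY phi \<tau>\<bar> \<le> B"
proof -
  obtain b where "minY phi \<tau> = phi_mix phi \<tau> b"
    by (rule minY_attained)
  then show ?thesis
    using phi_mix_abs_le[of phi, OF assms] by simp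
qed

lemma maxY_abs_le:
  fixes phi :: "'a::finite \<Rightarrow> 'b::finite \<Rightarrow> real"
  assumes "\<And>a b. \<bar>phi a b\<bar> \<le> B"
  shows "\<bar>maxY phi \<tau>\<bar> \<le> B"
proof -
  obtain b where "maxY phi \<tau> = phi_mix phi \<tau> b"
    by (rule maxY_attained)
  then show ?thesis
    using phi_mix_abs_le[of phi, OF assms] by simp
qed

lemma minY_le_maxY: "minY phi \<tau> \<le> maxY phi \<tau>"
  using minY_le maxY_ge order_trans by blast

lemma tendsto_phi_mix:
  fixes phi :: "'a::finite \<Rightarrow> 'b \<Rightarrow> real"
  assumes "\<And>a. (\<lambda>n. pmf (P n) a) \<longlonglongrightarrow> pmf \<tau> a"
  shows "(\<lambda>n. phi_mix phi (P n) b) \<longlonglongrightarrow> phi_mix phi \<tau> b"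
  unfolding phi_mix_eq_sum by (intro tendsto_intros assms)

lemma tendsto_minY:
  fixes phi :: "'a::finite \<Rightarrow> 'b::finite \<Rightarrow> real"
  assumes "\<And>a. (\<lambda>n. pmf (P n) a) \<longlonglongrightarrow> pmf \<tau> a"
  shows "(\<lambda>n. minY phi (P n)) \<longlonglongrightarrow> minY phi \<tau>"
  unfolding minY_def by (intro tendsto_Min tendsto_phi_mix assms) auto

lemma tendsto_maxY:
  fixes phi :: "'a::finite \<Rightarrow> 'b::finite \<Rightarrow> real"
  assumes "\<And>a. (\<lambda>n. pmf (P n) a) \<longlonglongrightarrow> pmf \<tau> a"
  shows "(\<lambda>n. maxY phi (P n)) \<longlonglongrightarrow> maxY phi \<tau>"
  unfolding maxY_def by (intro tendsto_Max tendsto_phi_mix assms) auto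

(* With d = 0: tp is in Phi+, tm is in Phi-, and whenever the denominator is positive
   the quotient in the definition of lambda_min at (tp, tm) is at least 1 - lam.
   Positive slack d is needed for approximation arguments. *)
definition autocratic_pair :: "('a \<Rightarrow> 'b::finite \<Rightarrow> real) \<Rightarrow> real \<Rightarrow> real \<Rightarrow> 'a pmf \<Rightarrow> 'a pmf \<Rightarrow> bool" where
  "autocratic_pair phi lam d tp tm \<longleftrightarrow>
     - d \<le> minY phi tp \<and> maxY phi tm \<le> d \<and>
     (1 - lam) * max (maxY phi tp - maxY phi tm) (minY phi tp - minY phi tm)
       \<le> minY phi tp - maxY phi tm + d"

lemma autocratic_pair_iff:
  assumes "lam \<le> 1"
  shows "autocratic_pair phi lam d tp tm \<longleftrightarrow>
    - d \<le> minY phi tp \<and> maxY phi tm \<le> d \<and>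
    (1 - lam) * (maxY phi tp - maxY phi tm) \<le> minY phi tp - maxY phi tm + d \<and>
    (1 - lam) * (minY phi tp - minY phi tm) \<le> minY phi tp - maxY phi tm + d"
  using assms by (simp add: autocratic_pair_def max_mult_distrib_left)

lemma autocratic_pair_limit:
  fixes phi :: "'a::finite \<Rightarrow> 'b::finite \<Rightarrow> real"
  assumes "\<And>d. 0 < d \<Longrightarrow> \<exists>tp tm. autocratic_pair phi lam d tp tm"
  shows "\<exists>tp tm. autocratic_pair phi lam 0 tp tm"
proof -
  define d :: "nat \<Rightarrow> real" where "d n = 1 / Suc n" for n
  obtain P Q where PQ: "\<And>n. autocratic_pair phi lam (d n) (P n) (Q n)"
    using assms[of "d _"] unfolding d_def by (metis of_nat_0_less_iff zero_less_Suc zero_less_divide_1_iff)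
  obtain r tp where r: "strict_mono r" and lim_P: "\<And>a. (\<lambda>n. pmf (P (r n)) a) \<longlonglongrightarrow> pmf tp a"
    using pmf_convergent_subseq[of P] by blast
  obtain r' tm where r': "strict_mono r'" and lim_Q: "\<And>a. (\<lambda>n. pmf (Q (r (r' n))) a) \<longlonglongrightarrow> pmf tm a"
    using pmf_convergent_subseq[of "\<lambda>n. Q (r n)"] by blast
  define k where "k = r \<circ> r'"
  have lim_d: "(\<lambda>n. d (k n)) \<longlonglongrightarrow> 0"
    using LIMSEQ_subseq_LIMSEQ[OF LIMSEQ_Suc[OF lim_inverse_n'] strict_mono_o[OF r r']]
    by (simp add: d_def k_def o_def)
  have lim_P': "(\<lambda>n. pmf (P (k n)) a) \<longlonglongrightarrow> pmf tp a" for a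
    using LIMSEQ_subseq_LIMSEQ[OF lim_P r'] by (simp add: k_def o_def)
  have lim_Q': "(\<lambda>n. pmf (Q (k n)) a) \<longlonglongrightarrow> pmf tm a" for a
    using lim_Q by (simp add: k_def)
  note lim_minP = tendsto_minY[OF lim_P', of phi] and lim_maxP = tendsto_maxY[OF lim_P', of phi]
    and lim_minQ = tendsto_minY[OF lim_Q', of phi] and lim_maxQ = tendsto_maxY[OF lim_Q', of phi]
  have "- 0 \<le> minY phi tp"
    using PQ by (intro LIMSEQ_le[OF tendsto_minus[OF lim_d] lim_minP]) (auto simp: autocratic_pair_def)
  moreover have "maxY phi tm \<le> 0"
    using PQ by (intro LIMSEQ_le[OF lim_maxQ lim_d]) (auto simp: autocratic_pair_def)
  moreover have "(1 - lam) * max (maxY phi tp - maxY phi tm) (minY phi tp - minY phi tm)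
      \<le> minY phi tp - maxY phi tm + 0"
  proof (rule LIMSEQ_le)
    show "(\<lambda>n. (1 - lam) * max (maxY phi (P (k n)) - maxY phi (Q (k n))) (minY phi (P (k n)) - minY phi (Q (k n))))
        \<longlonglongrightarrow> (1 - lam) * max (maxY phi tp - maxY phi tm) (minY phi tp - minY phi tm)"
      by (intro tendsto_intros lim_minP lim_maxP lim_minQ lim_maxQ)
    show "(\<lambda>n. minY phi (P (k n)) - maxY phi (Q (k n)) + d (k n)) \<longlonglongrightarrow> minY phi tp - maxY phi tm + 0"
      by (intro tendsto_intros lim_minP lim_maxQ lim_d)
  qed (use PQ in \<open>auto simp: autocratic_pair_def\<close>)
  ultimately show ?thesis
    unfolding autocratic_pair_def by auto
qed

section \<open>Promise-keeping strategies\<close>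

lemma phi_mix_bernoulli_bind:
  fixes phi :: "'a::finite \<Rightarrow> 'b \<Rightarrow> real"
  assumes "0 \<le> p" "p \<le> 1"
  shows "phi_mix phi (bernoulli_pmf p \<bind> (\<lambda>c. if c then tp else tm)) b =
    p * phi_mix phi tp b + (1 - p) * phi_mix phi tm b"
  using assms
  by (simp add: phi_mix_eq_sum pmf_bind algebra_simps sum.distrib sum_subtractf sum_distrib_left)

lemma autocratic_pair_first_action:
  fixes phi :: "'a::finite \<Rightarrow> 'b::finite \<Rightarrow> real"
  assumes "autocratic_pair phi lam 0 tp tm" "lam \<le> 1" "maxY phi tm \<le> v" "v \<le> minY phi tp"
  obtains \<tau> where "\<And>b. v - lam * minY phi tp \<le> (1 - lam) * phi_mix phi \<tau> b"
    and "\<And>b. (1 - lam) * phi_mix phi \<tau> b \<le> v - lam * maxY phi tm"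
proof -
  define lo up where "lo = maxY phi tm" and "up = minY phi tp"
  have spread: "(1 - lam) * (maxY phi tp - lo) \<le> up - lo" "(1 - lam) * (up - minY phi tm) \<le> up - lo"
    using assms(1,2) by (simp_all add: autocratic_pair_iff lo_def up_def)
  obtain p where p: "0 \<le> p" "p \<le> 1"
    and le: "(1 - p) * lo + p * ((1 - lam) * maxY phi tp + lam * lo) \<le> v"
    and ge: "v \<le> (1 - p) * ((1 - lam) * minY phi tm + lam * up) + p * up"
    using exists_mix_weight[of lo v up "(1 - lam) * minY phi tm + lam * up" "(1 - lam) * maxY phi tp + lam * lo"]
      assms(3,4) spread by (auto simp: lo_def up_def algebra_simps)
  define \<tau> where "\<tau> = bernoulli_pmf p \<bind> (\<lambda>c. if c then tp else tm)"
  have mix: "phi_mix phi \<tau> b = p * phi_mix phi tp b + (1 - p) * phi_mix phi tm b" for b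
    unfolding \<tau>_def using p by (rule phi_mix_bernoulli_bind)
  show thesis
  proof (rule that)
    fix b
    have "p * up + (1 - p) * minY phi tm \<le> phi_mix phi \<tau> b"
      unfolding mix up_def using p by (intro add_mono mult_left_mono minY_le) auto
    then have "(1 - lam) * (p * up + (1 - p) * minY phi tm) \<le> (1 - lam) * phi_mix phi \<tau> b"
      using assms(2) by (intro mult_left_mono) auto
    then show "v - lam * minY phi tp \<le> (1 - lam) * phi_mix phi \<tau> b"
      using ge by (simp add: up_def algebra_simps)
    have "phi_mix phi \<tau> b \<le> p * maxY phi tp + (1 - p) * lo"
      unfolding mix lo_def using p by (intro add_mono mult_left_mono maxY_ge) auto
    then have "(1 - lam) * phi_mix phi \<tau> b \<le> (1 - lam) * (p * maxY phi tp + (1 - p) * lo)"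
      using assms(2) by (intro mult_left_mono) auto
    then show "(1 - lam) * phi_mix phi \<tau> b \<le> v - lam * maxY phi tm"
      using le by (simp add: lo_def algebra_simps)
  qed
qed

(* X keeps track of a promised value w: it plays act w and, after Y has played b,
   promises upd w b for the rest of the game. *)
definition value_strategy :: "(real \<Rightarrow> 'a pmf) \<Rightarrow> (real \<Rightarrow> 'b \<Rightarrow> real) \<Rightarrow> real \<Rightarrow> ('a, 'b) hist \<Rightarrow> 'a pmf" where
  "value_strategy act upd v h = act (foldl (\<lambda>w (a, b). upd w b) v h)"

lemma value_strategy_Nil: "value_strategy act upd v [] = act v"
  by (simp add: value_strategy_def)

lemma continuation_value_strategy:
  "continuation (value_strategy act upd v) a b = value_strategy act upd (upd v b)"
  by (simp add: continuation_def value_strategy_def fun_eq_iff)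

lemma disc_payoff_value_strategy:
  fixes phi :: "'a::finite \<Rightarrow> 'b::finite \<Rightarrow> real"
  assumes lam: "0 \<le> lam" "lam < 1" and "bounded V" "v \<in> V"
    and upd_in: "\<And>w b. w \<in> V \<Longrightarrow> upd w b \<in> V"
    and promise: "\<And>w b. w \<in> V \<Longrightarrow> (1 - lam) * phi_mix phi (act w) b + lam * upd w b = w"
  shows "disc_payoff phi lam (value_strategy act upd v) \<sigma>Y = v"
proof -
  obtain B where B: "\<And>a b. \<bar>phi a b\<bar> \<le> B"
    using finite_payoff_bounded by blast
  obtain R where R: "\<And>w. w \<in> V \<Longrightarrow> \<bar>w\<bar> \<le> R"
    using \<open>bounded V\<close> by (auto simp: bounded_real)
  define err where "err w \<sigma>Y = disc_payoff phi lam (value_strategy act upd w) \<sigma>Y - w" for w \<sigma>Y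
  have err_step: "err w \<sigma>Y = lam * (\<Sum>a\<in>UNIV. \<Sum>b\<in>UNIV. pmf (act w) a * pmf (\<sigma>Y []) b *
      err (upd w b) (continuation \<sigma>Y a b))" if "w \<in> V" for w \<sigma>Y
  proof -
    define pq where "pq a b = pmf (act w) a * pmf (\<sigma>Y []) b" for a b
    define D where "D a b = disc_payoff phi lam (value_strategy act upd (upd w b)) (continuation \<sigma>Y a b)" for a b
    have "w = (\<Sum>b\<in>UNIV. pmf (\<sigma>Y []) b * ((1 - lam) * phi_mix phi (act w) b + lam * upd w b))"
      by (simp add: promise[OF that] sum_pmf_eq_1 flip: sum_distrib_right)
    also have "\<dots> = (\<Sum>a\<in>UNIV. \<Sum>b\<in>UNIV. pq a b * ((1 - lam) * phi a b + lam * upd w b))"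
      unfolding pq_def by (rule sum_pmf_pmf_phi_mix[symmetric])
    finally have "err w \<sigma>Y = (\<Sum>a\<in>UNIV. \<Sum>b\<in>UNIV. pq a b * ((1 - lam) * phi a b + lam * D a b)) -
        (\<Sum>a\<in>UNIV. \<Sum>b\<in>UNIV. pq a b * ((1 - lam) * phi a b + lam * upd w b))"
      using disc_payoff_unfold[OF lam, of phi "value_strategy act upd w" \<sigma>Y]
      by (simp add: err_def pq_def D_def value_strategy_Nil continuation_value_strategy)
    also have "\<dots> = (\<Sum>a\<in>UNIV. \<Sum>b\<in>UNIV. lam * (pq a b * (D a b - upd w b)))"
      by (simp add: sum_subtractf[symmetric] algebra_simps)
    finally show ?thesis
      by (simp add: err_def pq_def D_def sum_distrib_left)
  qed
  have err_bound: "\<bar>err w \<sigma>Y\<bar> \<le> lam ^ n * (B + R)" if "w \<in> V" for n w \<sigma>Y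
    using that
  proof (induction n arbitrary: w \<sigma>Y)
    case 0
    have "\<bar>err w \<sigma>Y\<bar> \<le> \<bar>disc_payoff phi lam (value_strategy act upd w) \<sigma>Y\<bar> + \<bar>w\<bar>"
      unfolding err_def by (rule abs_triangle_ineq4)
    then show ?case
      using disc_payoff_abs_le[of phi, OF B lam, of "value_strategy act upd w" \<sigma>Y] R[OF 0] by simp
  next
    case (Suc n)
    have "\<bar>\<Sum>a\<in>UNIV. \<Sum>b\<in>UNIV. pmf (act w) a * pmf (\<sigma>Y []) b * err (upd w b) (continuation \<sigma>Y a b)\<bar>
        \<le> lam ^ n * (B + R)"
      by (intro pmf_pmf_average_abs_le Suc.IH upd_in Suc.prems)
    then show ?case
      using lam by (simp add: err_step[OF Suc.prems] abs_mult mult_left_mono mult.assoc)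
  qed
  have "(\<lambda>n. lam ^ n * (B + R)) \<longlonglongrightarrow> 0"
    using lam by (intro tendsto_mult_left_zero LIMSEQ_power_zero) simp
  then have "\<bar>err v \<sigma>Y\<bar> \<le> 0"
    by (rule LIMSEQ_le_const) (use err_bound[OF \<open>v \<in> V\<close>] in auto)
  then show ?thesis
    by (simp add: err_def)
qed

lemma autocratic_pair_imp_autocratic:
  fixes phi :: "'a::finite \<Rightarrow> 'b::finite \<Rightarrow> real"
  assumes lam: "0 \<le> lam" "lam < 1" and pair: "autocratic_pair phi lam 0 tp tm"
  shows "\<exists>\<sigma>X :: ('a, 'b) hist \<Rightarrow> 'a pmf. autocratic phi lam \<sigma>X"
proof -
  define lo up where "lo = maxY phi tm" and "up = minY phi tp"
  have "lo \<le> 0" "0 \<le> up"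
    using pair by (simp_all add: autocratic_pair_def lo_def up_def)
  define ok where "ok w \<tau> \<longleftrightarrow> (\<forall>b. w - lam * up \<le> (1 - lam) * phi_mix phi \<tau> b \<and>
      (1 - lam) * phi_mix phi \<tau> b \<le> w - lam * lo)" for w \<tau>
  define act where "act w = (SOME \<tau>. ok w \<tau>)" for w
  define upd where "upd w b = (w - (1 - lam) * phi_mix phi (act w) b) / lam" for w b
  have act: "ok w (act w)" if w: "w \<in> {lo..up}" for w
  proof -
    obtain \<tau> where "\<And>b. w - lam * minY phi tp \<le> (1 - lam) * phi_mix phi \<tau> b"
      and "\<And>b. (1 - lam) * phi_mix phi \<tau> b \<le> w - lam * maxY phi tm"
      by (rule autocratic_pair_first_action[OF pair, where v = w]) (use w lam in \<open>auto simp: lo_def up_def\<close>)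
    then have "ok w \<tau>"
      by (simp add: ok_def lo_def up_def)
    then show ?thesis
      unfolding act_def by (rule someI)
  qed
  \<comment> \<open>For \<open>lam = 0\<close> the quotient in \<open>upd\<close> is \<open>0 \<in> {lo..up}\<close>, and \<open>act w\<close> pays exactly \<open>w\<close>.\<close>
  have "upd w b \<in> {lo..up} \<and> (1 - lam) * phi_mix phi (act w) b + lam * upd w b = w"
    if "w \<in> {lo..up}" for w b
  proof (cases "lam = 0")
    case True
    then have "phi_mix phi (act w) b = w"
      using act[OF that] by (simp add: ok_def) (metis order.antisym)
    then show ?thesis
      using True \<open>lo \<le> 0\<close> \<open>0 \<le> up\<close> by (simp add: upd_def)
  next
    case False
    then show ?thesis
      using act[OF that] lam by (auto simp: ok_def upd_def field_simps)
  qed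
  then have "disc_payoff phi lam (value_strategy act upd 0) \<sigma>Y = 0" for \<sigma>Y
    using \<open>lo \<le> 0\<close> \<open>0 \<le> up\<close> by (intro disc_payoff_value_strategy[OF lam bounded_closed_interval]) auto
  then show ?thesis
    unfolding autocratic_def by blast
qed

section \<open>Enforceable values\<close>

definition start_with :: "'b \<Rightarrow> ('a \<times> 'b \<Rightarrow> ('a, 'b) hist \<Rightarrow> 'b pmf) \<Rightarrow> ('a, 'b) hist \<Rightarrow> 'b pmf" where
  "start_with b F h = (case h of [] \<Rightarrow> return_pmf b | x # h' \<Rightarrow> F x h')"

lemma disc_payoff_start_with:
  fixes phi :: "'a::finite \<Rightarrow> 'b::finite \<Rightarrow> real"
  assumes "0 \<le> lam" "lam < 1"
  shows "disc_payoff phi lam \<sigma>X (start_with b F) = (1 - lam) * phi_mix phi (\<sigma>X []) b +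
    lam * (\<Sum>a\<in>UNIV. pmf (\<sigma>X []) a * disc_payoff phi lam (continuation \<sigma>X a b) (F (a, b)))"
proof -
  have cont: "continuation (start_with b F) a b' = F (a, b')" for a b'
    by (simp add: continuation_def start_with_def fun_eq_iff)
  have return: "(\<Sum>b'\<in>UNIV. c * pmf (return_pmf b) b' * g b') = c * g b" for c and g :: "'b \<Rightarrow> real"
  proof -
    have "(\<Sum>b'\<in>UNIV. c * pmf (return_pmf b) b' * g b') = (\<Sum>b'\<in>UNIV. if b' = b then c * g b else 0)"
      by (rule sum.cong) (auto simp: indicator_def)
    then show ?thesis
      by simp
  qed
  have "disc_payoff phi lam \<sigma>X (start_with b F) =
      (\<Sum>a\<in>UNIV. \<Sum>b'\<in>UNIV. pmf (\<sigma>X []) a * pmf (return_pmf b) b' *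
        ((1 - lam) * phi a b' + lam * disc_payoff phi lam (continuation \<sigma>X a b') (F (a, b'))))"
    by (subst disc_payoff_unfold[OF assms]) (simp add: cont start_with_def)
  also have "\<dots> = (\<Sum>a\<in>UNIV. pmf (\<sigma>X []) a *
        ((1 - lam) * phi a b + lam * disc_payoff phi lam (continuation \<sigma>X a b) (F (a, b))))"
    by (simp only: return)
  also have "\<dots> = (1 - lam) * phi_mix phi (\<sigma>X []) b +
      lam * (\<Sum>a\<in>UNIV. pmf (\<sigma>X []) a * disc_payoff phi lam (continuation \<sigma>X a b) (F (a, b)))"
    by (simp add: phi_mix_eq_sum algebra_simps sum.distrib sum_subtractf sum_distrib_left)
  finally show ?thesis .
qed

lemma enforced_continuation:
  fixes phi :: "'a::finite \<Rightarrow> 'b::finite \<Rightarrow> real"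
  assumes lam: "0 < lam" "lam < 1" and enf: "\<And>\<sigma>Y. disc_payoff phi lam \<sigma>X \<sigma>Y = c"
    and a: "0 < pmf (\<sigma>X []) a"
  shows "disc_payoff phi lam (continuation \<sigma>X a b) \<rho> = disc_payoff phi lam (continuation \<sigma>X a b) \<rho>'"
proof -
  define F G where "F = (\<lambda>_. \<rho>)((a, b) := \<rho>')" and "G = (\<lambda>_ :: 'a \<times> 'b. \<rho>)"
  define D where "D H a' = disc_payoff phi lam (continuation \<sigma>X a' b) (H (a', b))" for H a'
  have start: "disc_payoff phi lam \<sigma>X (start_with b H) =
      (1 - lam) * phi_mix phi (\<sigma>X []) b + lam * (\<Sum>a'\<in>UNIV. pmf (\<sigma>X []) a' * D H a')" for H
    using lam by (simp add: disc_payoff_start_with D_def)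
  have "lam * (\<Sum>a'\<in>UNIV. pmf (\<sigma>X []) a' * D F a') = lam * (\<Sum>a'\<in>UNIV. pmf (\<sigma>X []) a' * D G a')"
    using start[of F] start[of G] enf[of "start_with b F"] enf[of "start_with b G"] by linarith
  then have "(\<Sum>a'\<in>UNIV. pmf (\<sigma>X []) a' * D F a') = (\<Sum>a'\<in>UNIV. pmf (\<sigma>X []) a' * D G a')"
    using lam by simp
  then have "(\<Sum>a'\<in>UNIV. pmf (\<sigma>X []) a' * (D F a' - D G a')) = 0"
    by (simp add: right_diff_distrib sum_subtractf)
  moreover have "(\<Sum>a'\<in>UNIV. pmf (\<sigma>X []) a' * (D F a' - D G a')) =
      (\<Sum>a'\<in>UNIV. if a' = a then pmf (\<sigma>X []) a * (D F a - D G a) else 0)"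
    by (rule sum.cong) (auto simp: F_def G_def D_def)
  ultimately show ?thesis
    using a by (simp add: F_def G_def D_def)
qed

definition enforceable_values :: "('a::finite \<Rightarrow> 'b::finite \<Rightarrow> real) \<Rightarrow> real \<Rightarrow> real set" where
  "enforceable_values phi lam =
     {c. \<exists>\<sigma>X :: ('a, 'b) hist \<Rightarrow> 'a pmf. \<forall>\<sigma>Y. disc_payoff phi lam \<sigma>X \<sigma>Y = c}"

lemma bounded_enforceable_values:
  assumes "0 \<le> lam" "lam < 1"
  shows "bounded (enforceable_values phi lam)"
proof -
  obtain B where B: "\<And>a b. \<bar>phi a b\<bar> \<le> B"
    using finite_payoff_bounded by blast
  have "\<bar>c\<bar> \<le> B" if "c \<in> enforceable_values phi lam" for c
    using that disc_payoff_abs_le[of phi, OF B assms] by (auto simp: enforceable_values_def) metis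
  then show ?thesis
    by (auto simp: bounded_real)
qed

lemma enforcing_first_action:
  fixes phi :: "'a::finite \<Rightarrow> 'b::finite \<Rightarrow> real"
  assumes lam: "0 \<le> lam" "lam < 1" and enf: "\<And>\<sigma>Y. disc_payoff phi lam \<sigma>X \<sigma>Y = c"
  shows "c - lam * Sup (enforceable_values phi lam) \<le> (1 - lam) * phi_mix phi (\<sigma>X []) b"
    and "(1 - lam) * phi_mix phi (\<sigma>X []) b \<le> c - lam * Inf (enforceable_values phi lam)"
proof -
  define K where "K = enforceable_values phi lam"
  define \<rho> where "\<rho> = (\<lambda>_ :: ('a, 'b) hist. return_pmf b)"
  define D where "D a = disc_payoff phi lam (continuation \<sigma>X a b) \<rho>" for a
  define avg where "avg = (\<Sum>a\<in>UNIV. pmf (\<sigma>X []) a * D a)"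
  have c: "c = (1 - lam) * phi_mix phi (\<sigma>X []) b + lam * avg"
    using enf[of "start_with b (\<lambda>_. \<rho>)"] by (simp add: disc_payoff_start_with[OF lam] D_def avg_def)
  have "Inf K \<le> avg \<and> avg \<le> Sup K" if "0 < lam"
  proof -
    have "D a \<in> K" if "0 < pmf (\<sigma>X []) a" for a
      using enforced_continuation[OF \<open>0 < lam\<close> lam(2) enf that]
      unfolding K_def enforceable_values_def D_def by blast
    moreover have "bdd_above K" "bdd_below K"
      using bounded_imp_bdd_above[OF bounded_enforceable_values[of lam phi, OF lam]]
        bounded_imp_bdd_below[OF bounded_enforceable_values[of lam phi, OF lam]]
      by (simp_all add: K_def)
    ultimately show ?thesis
      unfolding avg_def by (auto intro!: pmf_average_le pmf_average_ge cSup_upper cInf_lower)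
  qed
  then have "lam * Inf K \<le> lam * avg \<and> lam * avg \<le> lam * Sup K"
    using lam by (cases "lam = 0") (auto intro: mult_left_mono)
  then show "c - lam * Sup (enforceable_values phi lam) \<le> (1 - lam) * phi_mix phi (\<sigma>X []) b"
    and "(1 - lam) * phi_mix phi (\<sigma>X []) b \<le> c - lam * Inf (enforceable_values phi lam)"
    using c by (simp_all add: K_def)
qed

lemma enforceable_near_Sup:
  fixes phi :: "'a::finite \<Rightarrow> 'b::finite \<Rightarrow> real"
  assumes lam: "0 \<le> lam" "lam < 1" and "enforceable_values phi lam \<noteq> {}" "0 < e"
  defines "S \<equiv> Sup (enforceable_values phi lam)" and "I \<equiv> Inf (enforceable_values phi lam)"
  obtains \<tau> where "S - e \<le> minY phi \<tau>" "(1 - lam) * maxY phi \<tau> \<le> S - lam * I"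
proof -
  have "0 < (1 - lam) * e"
    using assms by simp
  then obtain c where "c \<in> enforceable_values phi lam" "S - (1 - lam) * e < c"
    using less_cSupD[OF assms(3), of "S - (1 - lam) * e"] by (auto simp: S_def)
  moreover from this have "c \<le> S"
    unfolding S_def using bounded_imp_bdd_above[OF bounded_enforceable_values[of lam phi, OF lam]]
    by (auto intro: cSup_upper)
  ultimately obtain \<sigma> where \<sigma>: "\<And>\<sigma>Y. disc_payoff phi lam \<sigma> \<sigma>Y = c" and "S - (1 - lam) * e < c" "c \<le> S"
    by (auto simp: enforceable_values_def)
  obtain b1 b2 where b: "minY phi (\<sigma> []) = phi_mix phi (\<sigma> []) b1" "maxY phi (\<sigma> []) = phi_mix phi (\<sigma> []) b2"
    by (meson minY_attained maxY_attained)
  have "(1 - lam) * (S - e) < c - lam * S"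
    using \<open>S - (1 - lam) * e < c\<close> by (simp add: algebra_simps)
  also have "\<dots> \<le> (1 - lam) * minY phi (\<sigma> [])"
    using enforcing_first_action(1)[OF lam \<sigma>, of b1] by (simp add: b S_def)
  finally have "S - e \<le> minY phi (\<sigma> [])"
    using lam by simp
  moreover have "(1 - lam) * maxY phi (\<sigma> []) \<le> S - lam * I"
    using enforcing_first_action(2)[OF lam \<sigma>, of b2] \<open>c \<le> S\<close> by (simp add: b I_def)
  ultimately show thesis
    by (rule that)
qed

lemma enforceable_near_Inf:
  fixes phi :: "'a::finite \<Rightarrow> 'b::finite \<Rightarrow> real"
  assumes lam: "0 \<le> lam" "lam < 1" and "enforceable_values phi lam \<noteq> {}" "0 < e"
  defines "S \<equiv> Sup (enforceable_values phi lam)" and "I \<equiv> Inf (enforceable_values phi lam)"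
  obtains \<tau> where "maxY phi \<tau> \<le> I + e" "I - lam * S \<le> (1 - lam) * minY phi \<tau>"
proof -
  have "0 < (1 - lam) * e"
    using assms by simp
  then obtain c where "c \<in> enforceable_values phi lam" "c < I + (1 - lam) * e"
    using cInf_lessD[OF assms(3), of "I + (1 - lam) * e"] by (auto simp: I_def)
  moreover from this have "I \<le> c"
    unfolding I_def using bounded_imp_bdd_below[OF bounded_enforceable_values[of lam phi, OF lam]]
    by (auto intro: cInf_lower)
  ultimately obtain \<sigma> where \<sigma>: "\<And>\<sigma>Y. disc_payoff phi lam \<sigma> \<sigma>Y = c" and "c < I + (1 - lam) * e" "I \<le> c"
    by (auto simp: enforceable_values_def)
  obtain b1 b2 where b: "minY phi (\<sigma> []) = phi_mix phi (\<sigma> []) b1" "maxY phi (\<sigma> []) = phi_mix phi (\<sigma> []) b2"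
    by (meson minY_attained maxY_attained)
  have "(1 - lam) * maxY phi (\<sigma> []) \<le> c - lam * I"
    using enforcing_first_action(2)[OF lam \<sigma>, of b2] by (simp add: b I_def)
  also have "\<dots> < (1 - lam) * (I + e)"
    using \<open>c < I + (1 - lam) * e\<close> by (simp add: algebra_simps)
  finally have "maxY phi (\<sigma> []) \<le> I + e"
    using lam by simp
  moreover have "I - lam * S \<le> (1 - lam) * minY phi (\<sigma> [])"
    using enforcing_first_action(1)[OF lam \<sigma>, of b1] \<open>I \<le> c\<close> by (simp add: b S_def)
  ultimately show thesis
    by (rule that)
qed

lemma autocratic_pair_from_bounds:
  assumes lam: "0 \<le> lam" "lam < 1" and "I \<le> 0" "0 \<le> S" "0 \<le> e"
    and tp_min: "S - e \<le> minY phi tp" and tp_max: "(1 - lam) * maxY phi tp \<le> S - lam * I"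
    and tm_max: "maxY phi tm \<le> I + e" and tm_min: "I - lam * S \<le> (1 - lam) * minY phi tm"
  shows "autocratic_pair phi lam (2 * e) tp tm"
proof -
  have e_le: "lam * e \<le> e"
    using lam \<open>0 \<le> e\<close> by (simp add: mult_left_le_one_le)
  have mono: "lam * maxY phi tm \<le> lam * I + lam * e" "lam * S - lam * e \<le> lam * minY phi tp"
    using mult_left_mono[OF tm_max lam(1)] mult_left_mono[OF tp_min lam(1)]
    by (simp_all add: algebra_simps)
  have "(1 - lam) * (maxY phi tp - maxY phi tm) = (1 - lam) * maxY phi tp - maxY phi tm + lam * maxY phi tm"
    by (simp add: algebra_simps)
  also have "\<dots> \<le> minY phi tp - maxY phi tm + 2 * e"
    using tp_max tp_min mono(1) e_le by linarith
  finally have "(1 - lam) * (maxY phi tp - maxY phi tm) \<le> minY phi tp - maxY phi tm + 2 * e" .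
  moreover have "(1 - lam) * (minY phi tp - minY phi tm) = minY phi tp - lam * minY phi tp - (1 - lam) * minY phi tm"
    by (simp add: algebra_simps)
  moreover have "\<dots> \<le> minY phi tp - maxY phi tm + 2 * e"
    using tm_min tm_max mono(2) e_le by linarith
  ultimately show ?thesis
    using tp_min tm_max \<open>I \<le> 0\<close> \<open>0 \<le> S\<close> \<open>0 \<le> e\<close> lam
    unfolding autocratic_pair_iff[OF less_imp_le[OF lam(2)]] by (intro conjI) linarith+
qed

lemma autocratic_imp_autocratic_pair:
  fixes phi :: "'a::finite \<Rightarrow> 'b::finite \<Rightarrow> real"
  assumes lam: "0 \<le> lam" "lam < 1" and "autocratic phi lam \<sigma>X"
  shows "\<exists>tp tm. autocratic_pair phi lam 0 tp tm"
proof (rule autocratic_pair_limit)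
  fix d :: real
  assume "0 < d"
  define K where "K = enforceable_values phi lam"
  have "0 \<in> K"
    using \<open>autocratic phi lam \<sigma>X\<close> by (auto simp: K_def enforceable_values_def autocratic_def)
  then have "K \<noteq> {}" "Inf K \<le> 0" "0 \<le> Sup K"
    using bounded_imp_bdd_above[OF bounded_enforceable_values[of lam phi, OF lam]]
      bounded_imp_bdd_below[OF bounded_enforceable_values[of lam phi, OF lam]]
    by (auto simp: K_def intro: cSup_upper cInf_lower)
  moreover obtain tp where "Sup K - d / 2 \<le> minY phi tp" "(1 - lam) * maxY phi tp \<le> Sup K - lam * Inf K"
    using enforceable_near_Sup[OF lam, of phi "d / 2"] \<open>K \<noteq> {}\<close> \<open>0 < d\<close> unfolding K_def by auto
  moreover obtain tm where "maxY phi tm \<le> Inf K + d / 2" "Inf K - lam * Sup K \<le> (1 - lam) * minY phi tm"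
    using enforceable_near_Inf[OF lam, of phi "d / 2"] \<open>K \<noteq> {}\<close> \<open>0 < d\<close> unfolding K_def by auto
  ultimately have "autocratic_pair phi lam (2 * (d / 2)) tp tm"
    using \<open>0 < d\<close> by (intro autocratic_pair_from_bounds[OF lam]) auto
  then show "\<exists>tp tm. autocratic_pair phi lam d tp tm"
    by auto
qed

section \<open>The threshold lambda_min\<close>

definition enforcement_ratio :: "('a \<Rightarrow> 'b::finite \<Rightarrow> real) \<Rightarrow> 'a pmf \<times> 'a pmf \<Rightarrow> real" where
  "enforcement_ratio phi = (\<lambda>(tp, tm). (minY phi tp - maxY phi tm) /
     max (maxY phi tp - maxY phi tm) (minY phi tp - minY phi tm))"

lemma lambda_min_eq: "lambda_min phi = 1 - Sup (enforcement_ratio phi ` (PhiPlus phi \<times> PhiMinus phi))"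
  by (simp add: lambda_min_def enforcement_ratio_def)

lemma enforcement_ratio_denom_pos:
  assumes "PhiPlus phi \<inter> PhiMinus phi = {}" "tp \<in> PhiPlus phi" "tm \<in> PhiMinus phi"
  shows "0 < max (maxY phi tp - maxY phi tm) (minY phi tp - minY phi tm)"
proof -
  have "0 < maxY phi tp"
    using assms by (auto simp: PhiMinus_def)
  then show ?thesis
    using assms(3) by (simp add: PhiMinus_def)
qed

lemma bdd_above_enforcement_ratio:
  assumes "PhiPlus phi \<inter> PhiMinus phi = {}"
  shows "bdd_above (enforcement_ratio phi ` (PhiPlus phi \<times> PhiMinus phi))"
proof (rule bdd_aboveI2)
  fix x
  assume "x \<in> PhiPlus phi \<times> PhiMinus phi"
  then obtain tp tm where "x = (tp, tm)" "tp \<in> PhiPlus phi" "tm \<in> PhiMinus phi"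
    by auto
  then show "enforcement_ratio phi x \<le> 1"
    using enforcement_ratio_denom_pos[OF assms, of tp tm] minY_le_maxY[of phi tm]
    by (auto simp: enforcement_ratio_def divide_le_eq_1)
qed

lemma autocratic_pair_imp_lambda_min_le:
  assumes "autocratic_pair phi lam 0 tp tm" "PhiPlus phi \<inter> PhiMinus phi = {}"
  shows "lambda_min phi \<le> lam"
proof -
  have tp: "tp \<in> PhiPlus phi" and tm: "tm \<in> PhiMinus phi"
    using assms(1) by (simp_all add: autocratic_pair_def PhiPlus_def PhiMinus_def)
  then have "1 - lam \<le> enforcement_ratio phi (tp, tm)"
    using assms enforcement_ratio_denom_pos[OF assms(2)] by (simp add: autocratic_pair_def enforcement_ratio_def pos_le_divide_eq)
  also have "\<dots> \<le> Sup (enforcement_ratio phi ` (PhiPlus phi \<times> PhiMinus phi))"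
    using tp tm bdd_above_enforcement_ratio[OF assms(2)] by (intro cSup_upper) auto
  finally show ?thesis
    by (simp add: lambda_min_eq)
qed

lemma lambda_min_le_imp_autocratic_pair:
  fixes phi :: "'a::finite \<Rightarrow> 'b::finite \<Rightarrow> real"
  assumes disj: "PhiPlus phi \<inter> PhiMinus phi = {}" and ne: "PhiPlus phi \<times> PhiMinus phi \<noteq> {}"
    and "lambda_min phi \<le> lam" and "0 < d"
  shows "\<exists>tp tm. autocratic_pair phi lam d tp tm"
proof -
  obtain B where B: "\<And>a b. \<bar>phi a b\<bar> \<le> B"
    using finite_payoff_bounded by blast
  then have "0 \<le> B"
    by (meson abs_ge_zero order_trans)
  define R where "R = enforcement_ratio phi ` (PhiPlus phi \<times> PhiMinus phi)"
  define \<eta> where "\<eta> = d / (2 * B + 1)"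
  have "0 < \<eta>"
    using \<open>0 < d\<close> \<open>0 \<le> B\<close> by (simp add: \<eta>_def)
  have "R \<noteq> {}"
    using ne by (simp add: R_def)
  then obtain x where "x \<in> R" "Sup R - \<eta> < x"
    using less_cSupD[of R "Sup R - \<eta>"] \<open>0 < \<eta>\<close> by auto
  then obtain tp tm where tp: "tp \<in> PhiPlus phi" and tm: "tm \<in> PhiMinus phi"
    and near: "Sup R - \<eta> < enforcement_ratio phi (tp, tm)"
    by (auto simp: R_def)
  define N D where "N = minY phi tp - maxY phi tm"
    and "D = max (maxY phi tp - maxY phi tm) (minY phi tp - minY phi tm)"
  have "0 < D"
    unfolding D_def using disj tp tm by (rule enforcement_ratio_denom_pos)
  have "D \<le> 2 * B"
    using minY_abs_le[of phi, OF B] maxY_abs_le[of phi, OF B] unfolding D_def abs_le_iff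
    by (metis (no_types) add_mono max.bounded_iff diff_conv_add_uminus mult_2)
  have "1 - lam \<le> Sup R"
    using \<open>lambda_min phi \<le> lam\<close> by (simp add: lambda_min_eq R_def)
  then have "1 - lam \<le> N / D + \<eta>"
    using near by (simp add: enforcement_ratio_def N_def D_def)
  then have "(1 - lam) * D \<le> (N / D + \<eta>) * D"
    using \<open>0 < D\<close> by (intro mult_right_mono) auto
  also have "\<dots> = N + \<eta> * D"
    using \<open>0 < D\<close> by (simp add: distrib_right)
  also have "\<eta> * D \<le> \<eta> * (2 * B + 1)"
    using \<open>D \<le> 2 * B\<close> \<open>0 < \<eta>\<close> by (intro mult_left_mono) auto
  also have "\<eta> * (2 * B + 1) = d"
    using \<open>0 \<le> B\<close> by (simp add: \<eta>_def)
  finally have "autocratic_pair phi lam d tp tm"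
    using tp tm \<open>0 < d\<close> by (simp add: autocratic_pair_def PhiPlus_def PhiMinus_def N_def D_def)
  then show ?thesis
    by blast
qed

lemma ex_autocratic_pair_iff:
  fixes phi :: "'a::finite \<Rightarrow> 'b::finite \<Rightarrow> real"
  shows "(\<exists>tp tm. autocratic_pair phi lam 0 tp tm) \<longleftrightarrow>
    (PhiPlus phi \<noteq> {} \<and> PhiMinus phi \<noteq> {} \<and>
     (PhiPlus phi \<inter> PhiMinus phi \<noteq> {} \<or>
      (PhiPlus phi \<inter> PhiMinus phi = {} \<and> lam \<ge> lambda_min phi)))"
proof
  assume "\<exists>tp tm. autocratic_pair phi lam 0 tp tm"
  then obtain tp tm where "autocratic_pair phi lam 0 tp tm"
    by blast
  moreover from this have "tp \<in> PhiPlus phi" "tm \<in> PhiMinus phi"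
    by (simp_all add: autocratic_pair_def PhiPlus_def PhiMinus_def)
  ultimately show "PhiPlus phi \<noteq> {} \<and> PhiMinus phi \<noteq> {} \<and>
     (PhiPlus phi \<inter> PhiMinus phi \<noteq> {} \<or>
      (PhiPlus phi \<inter> PhiMinus phi = {} \<and> lam \<ge> lambda_min phi))"
    using autocratic_pair_imp_lambda_min_le by blast
next
  assume rhs: "PhiPlus phi \<noteq> {} \<and> PhiMinus phi \<noteq> {} \<and>
     (PhiPlus phi \<inter> PhiMinus phi \<noteq> {} \<or>
      (PhiPlus phi \<inter> PhiMinus phi = {} \<and> lam \<ge> lambda_min phi))"
  show "\<exists>tp tm. autocratic_pair phi lam 0 tp tm"
  proof (cases "PhiPlus phi \<inter> PhiMinus phi = {}")
    case True
    then show ?thesis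
      using rhs by (intro autocratic_pair_limit lambda_min_le_imp_autocratic_pair) auto
  next
    case False
    then obtain t where "0 \<le> minY phi t" "maxY phi t \<le> 0"
      by (auto simp: PhiPlus_def PhiMinus_def)
    then have "minY phi t = 0" "maxY phi t = 0"
      using minY_le_maxY[of phi t] by linarith+
    then have "autocratic_pair phi lam 0 t t"
      by (simp add: autocratic_pair_def)
    then show ?thesis
      by blast
  qed
qed

theorem proposition4:
  fixes phi :: "'a::finite \<Rightarrow> 'b::finite \<Rightarrow> real" and lam :: real
  assumes "0 \<le> lam" and "lam < 1"
  shows "(\<exists>\<sigma>X :: ('a, 'b) hist \<Rightarrow> 'a pmf. autocratic phi lam \<sigma>X) \<longleftrightarrow>
    (PhiPlus phi \<noteq> {} \<and> PhiMinus phi \<noteq> {} \<and>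
     (PhiPlus phi \<inter> PhiMinus phi \<noteq> {} \<or>
      (PhiPlus phi \<inter> PhiMinus phi = {} \<and> lam \<ge> lambda_min phi)))"
  unfolding ex_autocratic_pair_iff[symmetric]
  using autocratic_imp_autocratic_pair[OF assms] autocratic_pair_imp_autocratic[OF assms] by blast

end
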